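(* Let $V$ and $W$ be real inner product spaces of dimension $2$ and $3$ respectively, let $A:[0,1]\to\mathrm{Hom}(W,W)$ be a smooth path of positive self-adjoint operators and let $T:[0,1]\to\mathrm{Hom}(V,W)$ be a smooth path with $\ddot T(s)=A(s)\circ T(s)$. Then $u(s):=\|T(s)\|_1$ is convex on $[0,1]$. Moreover, if $T(s)$ has rank $2$ and $A(s)\circ T(s)\neq0$, then $\ddot u(s)>0$.
   Context: For $L\in\mathrm{Hom}(V,W)$, $\|L\|_1=\operatorname{tr}\sqrt{L^TL}$ ($1$-Schatten norm), with $L^T$ the adjoint. *)

theory Defs
  imports "HOL-Analysis.Analysis"
begin

text \<open>V = real^2, W = real^3 with standard inner products; Hom(V,W) = real^2^3 matrices
  (acting by *v), adjoint = transpose.\<close>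

definition psd_matrix :: "real^'n^'n \<Rightarrow> bool" where
  "psd_matrix S \<longleftrightarrow> transpose S = S \<and> (\<forall>x. 0 \<le> x \<bullet> (S *v x))"

definition matrix_sqrt :: "real^'n^'n \<Rightarrow> real^'n^'n" where
  "matrix_sqrt M = (THE S. psd_matrix S \<and> S ** S = M)"

definition schatten1 :: "real^'n^'m \<Rightarrow> real" where
  "schatten1 L = trace (matrix_sqrt (transpose L ** L))"

text \<open>D is a sequence of all derivatives of f on [0,1] (one-sided at endpoints): f is smooth on [0,1].\<close>
definition smooth_derivs :: "(real \<Rightarrow> 'a::real_normed_vector) \<Rightarrow> (nat \<Rightarrow> real \<Rightarrow> 'a) \<Rightarrow> bool" where
  "smooth_derivs f D \<longleftrightarrow> (\<forall>t\<in>{0..1}. D 0 t = f t) \<and>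
     (\<forall>n. \<forall>t\<in>{0..1}. (D n has_vector_derivative D (Suc n) t) (at t within {0..1}))"

end

theory Submission
  imports Defs
begin

text \<open>Write \<open>L = T s\<close> through its columns \<open>x, y\<close>. Then
  \<open>\<parallel>L\<parallel>\<^sub>1\<^sup>2 = |x|\<^sup>2 + |y|\<^sup>2 + 2 sqrt (gram_det x y)\<close>, and \<open>\<parallel>L\<parallel>\<^sub>1\<close> is the maximum of \<open>trace (Q\<^sup>T L)\<close>
  over maps \<open>Q\<close> of operator norm at most one. Freezing a maximiser \<open>Q\<close> at a point \<open>m\<close>, the function
  \<open>r \<mapsto> trace (Q\<^sup>T T r)\<close> is a smooth minorant of \<open>u\<close> touching it at \<open>m\<close>, with second derivative
  \<open>trace (Q\<^sup>T A T) \<ge> 0\<close>: in rank two \<open>Q\<close> is the polar factor \<open>L (L\<^sup>T L)^(-1/2)\<close> and this is the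
  trace of a product of a positive definite and a positive semidefinite matrix, in rank
  at most one \<open>Q = L / \<parallel>L\<parallel>\<^sub>F\<close>. A continuous function with such second-order supports at every
  interior point is convex. In rank two \<open>u\<close> is differentiable near \<open>m\<close> with the same first
  derivative as the minorant at \<open>m\<close>, so \<open>u'' \<ge> trace (Q\<^sup>T A T)\<close>, which is positive when \<open>A T \<noteq> 0\<close>.\<close>

section \<open>Positive semidefinite matrices\<close>

lemma psd_matrix_symmetric: "psd_matrix S \<Longrightarrow> transpose S = S"
  and psd_matrix_nonneg: "psd_matrix S \<Longrightarrow> 0 \<le> x \<bullet> (S *v x)"
  by (simp_all add: psd_matrix_def)

lemma symmetric_matrix_inner_commute:
  fixes S :: "real^'n^'n"
  assumes "transpose S = S"
  shows "x \<bullet> (S *v y) = y \<bullet> (S *v x)"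
  by (metis assms dot_lmul_matrix inner_commute transpose_matrix_vector)

lemma discriminant_le_if_quadratic_nonneg:
  fixes p q r :: real
  assumes nonneg: "\<And>l. 0 \<le> p + 2*l*q + l^2*r" and "0 \<le> r"
  shows "q^2 \<le> p*r"
proof (cases "r = 0")
  case True
  show ?thesis
  proof (rule ccontr)
    assume "\<not> ?thesis"
    then have "q \<noteq> 0" using True by simp
    have "0 \<le> p + 2*(-(p+1)/(2*q))*q + (-(p+1)/(2*q))^2*r" by (rule nonneg)
    also have "\<dots> = -1" using True \<open>q \<noteq> 0\<close> by (simp add: field_simps)
    finally show False by simp
  qed
next
  case False
  with \<open>0 \<le> r\<close> have "r > 0" by simp
  have "0 \<le> p + 2*(-q/r)*q + (-q/r)^2*r" by (rule nonneg)
  also have "\<dots> = (p*r - q^2)/r" using \<open>r > 0\<close> by (simp add: field_simps power2_eq_square)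
  finally show ?thesis using \<open>r > 0\<close> by (simp add: zero_le_divide_iff)
qed

lemma psd_matrix_Cauchy_Schwarz:
  fixes S :: "real^'n^'n"
  assumes "psd_matrix S"
  shows "(x \<bullet> (S *v y))^2 \<le> (x \<bullet> (S *v x)) * (y \<bullet> (S *v y))"
proof (rule discriminant_le_if_quadratic_nonneg)
  fix l :: real
  have "0 \<le> (x + l *\<^sub>R y) \<bullet> (S *v (x + l *\<^sub>R y))"
    using assms by (rule psd_matrix_nonneg)
  also have "\<dots> = x \<bullet> (S *v x) + 2*l*(x \<bullet> (S *v y)) + l^2*(y \<bullet> (S *v y))"
    using symmetric_matrix_inner_commute[OF psd_matrix_symmetric[OF assms], of y x]
    by (simp add: matrix_vector_right_distrib matrix_vector_mult_scaleR inner_add_left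
        inner_add_right power2_eq_square algebra_simps)
  finally show "0 \<le> x \<bullet> (S *v x) + 2*l*(x \<bullet> (S *v y)) + l^2*(y \<bullet> (S *v y))" .
qed (use assms psd_matrix_nonneg in blast)

lemma psd_matrix_quadratic_eq_0D:
  fixes S :: "real^'n^'n"
  assumes "psd_matrix S" "x \<bullet> (S *v x) = 0"
  shows "S *v x = 0"
proof -
  have "((S *v x) \<bullet> (S *v x))^2 \<le> 0"
    using psd_matrix_Cauchy_Schwarz[OF assms(1), of "S *v x" x] assms
    by (simp add: symmetric_matrix_inner_commute psd_matrix_symmetric)
  then show ?thesis by simp
qed

lemma psd_matrix_2_iff:
  fixes S :: "real^2^2"
  shows "psd_matrix S \<longleftrightarrow>
    S$1$2 = S$2$1 \<and> 0 \<le> S$1$1 \<and> 0 \<le> S$2$2 \<and> (S$1$2)^2 \<le> S$1$1 * S$2$2"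
proof
  assume S: "psd_matrix S"
  have entry: "axis i 1 \<bullet> (S *v axis j 1) = S$i$j" for i j :: 2
    by (simp add: inner_axis' matrix_vector_mult_basis column_def)
  show "S$1$2 = S$2$1 \<and> 0 \<le> S$1$1 \<and> 0 \<le> S$2$2 \<and> (S$1$2)^2 \<le> S$1$1 * S$2$2"
    using arg_cong[OF psd_matrix_symmetric[OF S], of "\<lambda>M. M$1$2"]
      psd_matrix_nonneg[OF S, of "axis 1 1"] psd_matrix_nonneg[OF S, of "axis 2 1"]
      psd_matrix_Cauchy_Schwarz[OF S, of "axis 1 1" "axis 2 1"]
    by (simp add: entry transpose_def)
next
  assume entries: "S$1$2 = S$2$1 \<and> 0 \<le> S$1$1 \<and> 0 \<le> S$2$2 \<and> (S$1$2)^2 \<le> S$1$1 * S$2$2"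
  have "0 \<le> x \<bullet> (S *v x)" for x :: "real^2"
  proof (cases "S$1$1 = 0")
    case True
    then have "S$1$2 = 0" "S$2$1 = 0" using entries by simp_all
    then show ?thesis
      using True entries
      by (simp add: inner_vec_def matrix_vector_mult_def sum_2 mult.left_commute[of "x$2"])
  next
    case False
    let ?a = "S$1$1" and ?b = "S$1$2" and ?c = "S$2$2"
    have "?a * (x \<bullet> (S *v x)) = (?a*x$1 + ?b*x$2)^2 + (?a*?c - ?b^2)*(x$2)^2"
      using entries by (simp add: inner_vec_def matrix_vector_mult_def sum_2 algebra_simps power2_eq_square)
    also have "\<dots> \<ge> 0" using entries by (intro add_nonneg_nonneg mult_nonneg_nonneg) auto
    finally show ?thesis using False entries by (simp add: zero_le_mult_iff)
  qed
  then show "psd_matrix S"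
    using entries by (simp add: psd_matrix_def vec_eq_iff forall_2 transpose_def)
qed

lemma psd_matrix_transpose_mult_self: "psd_matrix (transpose L ** L)"
proof -
  have "x \<bullet> ((transpose L ** L) *v x) = (L *v x) \<bullet> (L *v x)" for x
    by (simp add: matrix_vector_mul_assoc[symmetric] inner_commute[of x] dot_lmul_matrix)
  then show ?thesis by (simp add: psd_matrix_def matrix_transpose_mul)
qed

lemma trace_2: "trace (S :: 'a::semiring_1^2^2) = S$1$1 + S$2$2"
  by (simp add: trace_def sum_2)

lemma psd_sqrt_2:
  fixes S M :: "real^2^2"
  assumes S: "psd_matrix S" and sq: "S ** S = M"
  shows "trace S = sqrt (trace M + 2 * sqrt (det M))"
    and "trace S *\<^sub>R S = M + sqrt (det M) *\<^sub>R mat 1"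
proof -
  define p q r where "p = S$1$1" "q = S$1$2" "r = S$2$2"
  have pqr: "S$2$1 = q" "0 \<le> p" "0 \<le> r" "q^2 \<le> p*r"
    using S by (auto simp: psd_matrix_2_iff p_q_r_def)
  have M: "M$1$1 = p^2 + q^2" "M$1$2 = q*(p+r)" "M$2$1 = q*(p+r)" "M$2$2 = q^2 + r^2"
    using sq[symmetric] pqr(1)
    by (simp_all add: matrix_matrix_mult_def sum_2 p_q_r_def power2_eq_square algebra_simps)
  have "det M = (p*r - q^2)^2"
    by (simp add: det_2 M algebra_simps power2_eq_square)
  then have det: "sqrt (det M) = p*r - q^2" using pqr by simp
  have "trace M + 2*(p*r - q^2) = (p + r)^2"
    by (simp add: trace_2 M algebra_simps power2_eq_square)
  then show "trace S = sqrt (trace M + 2 * sqrt (det M))"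
    using pqr by (simp add: det trace_2 p_q_r_def)
  show "trace S *\<^sub>R S = M + sqrt (det M) *\<^sub>R mat 1"
    using M pqr(1)
    by (simp add: det trace_2 vec_eq_iff forall_2 mat_def p_q_r_def algebra_simps power2_eq_square)
qed

lemma psd_sqrt_2_unique:
  fixes S S' M :: "real^2^2"
  assumes "psd_matrix S" "S ** S = M" "psd_matrix S'" "S' ** S' = M"
  shows "S = S'"
proof -
  have trace: "trace S = trace S'"
    using psd_sqrt_2(1)[OF assms(1,2)] psd_sqrt_2(1)[OF assms(3,4)] by simp
  show ?thesis
  proof (cases "trace S = 0")
    case True
    have "X = 0" if "psd_matrix X" "trace X = 0" for X :: "real^2^2"
    proof -
      have "X$1$1 = 0" "X$2$2 = 0" "X$1$2 = X$2$1" "(X$1$2)^2 \<le> X$1$1 * X$2$2"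
        using that by (auto simp: psd_matrix_2_iff trace_2)
      then show ?thesis by (auto simp: vec_eq_iff forall_2)
    qed
    then show ?thesis using True trace assms(1,3) by metis
  next
    case False
    have "trace S *\<^sub>R S = trace S *\<^sub>R S'"
      using trace psd_sqrt_2(2)[OF assms(1,2)] psd_sqrt_2(2)[OF assms(3,4)] by simp
    with False show ?thesis by simp
  qed
qed

lemma psd_sqrt_2_exists:
  fixes M :: "real^2^2"
  assumes M: "psd_matrix M"
  shows "\<exists>S. psd_matrix S \<and> S ** S = M"
proof -
  have entries: "M$1$2 = M$2$1" "0 \<le> M$1$1" "0 \<le> M$2$2" "(M$1$2)^2 \<le> M$1$1 * M$2$2"
    using M[unfolded psd_matrix_2_iff] by blast+
  define d where "d = sqrt (det M)"
  define t where "t = sqrt (trace M + 2*d)"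
  have "det M = M$1$1 * M$2$2 - (M$1$2)^2"
    using entries(1) by (simp add: det_2 power2_eq_square)
  then have d: "0 \<le> d" "d^2 = M$1$1 * M$2$2 - (M$1$2)^2"
    using entries(4) by (simp_all add: d_def)
  have t: "0 \<le> t" "t^2 = M$1$1 + M$2$2 + 2*d"
    using entries d by (auto simp: t_def trace_2)
  show ?thesis
  proof (cases "t = 0")
    case True
    then have "M$1$1 = 0" "M$2$2 = 0" using t d entries by auto
    then have "M = 0" using entries by (auto simp: vec_eq_iff forall_2)
    then show ?thesis by (intro exI[of _ 0]) (simp add: psd_matrix_def transpose_def vec_eq_iff)
  next
    case False
    with t have "t > 0" by simp
    \<comment> \<open>by Cayley--Hamilton, a square root must be a multiple of \<open>M + sqrt (det M) I\<close>\<close>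
    define S where "S = (1/t) *\<^sub>R (M + d *\<^sub>R mat 1)"
    have S: "S$1$1 = (M$1$1 + d)/t" "S$1$2 = M$1$2/t" "S$2$1 = M$2$1/t" "S$2$2 = (M$2$2 + d)/t"
      by (simp_all add: S_def mat_def)
    have "0 \<le> d*(d + M$1$1 + M$2$2)" using entries d by simp
    then have "(M$1$2)^2 \<le> (M$1$1 + d)*(M$2$2 + d)"
      using entries(4) by (simp add: algebra_simps)
    then have "psd_matrix S"
      using entries d \<open>t > 0\<close>
      by (simp add: psd_matrix_2_iff S power_divide divide_right_mono power2_eq_square[of t])
    moreover have "S ** S = M"
    proof -
      have "(M + d *\<^sub>R mat 1) ** (M + d *\<^sub>R mat 1) = t^2 *\<^sub>R M"
        using d t entries(1)
        by (simp add: vec_eq_iff forall_2 matrix_matrix_mult_def sum_2 mat_def algebra_simps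
            power2_eq_square)
      then show ?thesis
        using \<open>t > 0\<close> by (simp add: S_def matrix_scalar_ac power2_eq_square flip: scalar_matrix_assoc)
    qed
    ultimately show ?thesis by blast
  qed
qed

lemma trace_matrix_sqrt_2:
  fixes M :: "real^2^2"
  assumes "psd_matrix M"
  shows "trace (matrix_sqrt M) = sqrt (trace M + 2 * sqrt (det M))"
proof -
  obtain S where S: "psd_matrix S" "S ** S = M"
    using psd_sqrt_2_exists[OF assms] by blast
  have "matrix_sqrt M = S"
    unfolding matrix_sqrt_def by (rule the_equality) (use S psd_sqrt_2_unique in blast)+
  then show ?thesis using psd_sqrt_2(1)[OF S] by simp
qed

section \<open>The trace norm of a pair of vectors\<close>

definition gram_det :: "'a::real_inner \<Rightarrow> 'a \<Rightarrow> real" where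
  "gram_det x y = (x \<bullet> x) * (y \<bullet> y) - (x \<bullet> y)^2"

definition schatten1_pair :: "'a::real_inner \<Rightarrow> 'a \<Rightarrow> real" where
  "schatten1_pair x y = sqrt (x \<bullet> x + y \<bullet> y + 2 * sqrt (gram_det x y))"

lemma gram_det_nonneg: "0 \<le> gram_det x y"
  using Cauchy_Schwarz_ineq[of x y] by (simp add: gram_det_def)

lemma gram_det_commute: "gram_det y x = gram_det x y"
  by (simp add: gram_det_def inner_commute)

lemma schatten1_pair_commute: "schatten1_pair y x = schatten1_pair x y"
  by (simp add: schatten1_pair_def gram_det_commute add.commute)

lemma schatten1_pair_nonneg: "0 \<le> schatten1_pair x y"
  by (simp add: schatten1_pair_def gram_det_nonneg)

lemma schatten1_eq_schatten1_pair:
  fixes L :: "real^2^'m"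
  shows "schatten1 L = schatten1_pair (column 1 L) (column 2 L)"
proof -
  have entry: "(transpose L ** L) $ i $ j = column i L \<bullet> column j L" for i j
    by (simp add: matrix_mult_transpose_dot_column)
  have "schatten1 L = sqrt (trace (transpose L ** L) + 2 * sqrt (det (transpose L ** L)))"
    by (simp add: schatten1_def trace_matrix_sqrt_2 psd_matrix_transpose_mult_self)
  then show ?thesis
    by (simp add: schatten1_pair_def gram_det_def trace_2 det_2 entry inner_commute
        power2_eq_square)
qed

lemma gram_det_pos_if_rank_2:
  fixes L :: "real^2^'m"
  assumes "rank L = 2"
  shows "0 < gram_det (column 1 L) (column 2 L)"
proof (rule ccontr)
  let ?a = "column 1 L" and ?b = "column 2 L"
  have mult: "L *v x = x$1 *\<^sub>R ?a + x$2 *\<^sub>R ?b" for x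
    by (simp add: vec_eq_iff matrix_vector_mult_def column_def sum_2 mult.commute)
  assume "\<not> ?thesis"
  then have degenerate: "gram_det ?a ?b = 0" using gram_det_nonneg[of ?a ?b] by linarith
  have "\<exists>x. x \<noteq> 0 \<and> L *v x = 0"
  proof (cases "?b = 0")
    case True
    then show ?thesis
      by (intro exI[of _ "vector [0, 1]"]) (auto simp: mult vec_eq_iff forall_2)
  next
    case False
    \<comment> \<open>\<open>L *v ?x\<close> is \<open>?b \<bullet> ?b\<close> times the component of \<open>?a\<close> orthogonal to \<open>?b\<close>\<close>
    let ?x = "vector [?b \<bullet> ?b, - (?a \<bullet> ?b)] :: real^2"
    have "(L *v ?x) \<bullet> (L *v ?x) = (?b \<bullet> ?b) * gram_det ?a ?b"
      by (simp add: mult gram_det_def inner_diff_left inner_diff_right inner_commute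
          power2_eq_square algebra_simps)
    then have "L *v ?x = 0" using degenerate by simp
    moreover have "?x \<noteq> 0" using False by (auto simp: vec_eq_iff forall_2)
    ultimately show ?thesis by blast
  qed
  then have "rank L \<noteq> CARD(2)" by (simp add: matrix_nonfull_linear_equations_eq)
  then show False using assms by simp
qed

lemma gram_det_le_orthogonal_sum:
  fixes x0 y0 x1 y1 :: "'a::real_inner"
  assumes "x0 \<bullet> x1 = 0" "x0 \<bullet> y1 = 0" "y0 \<bullet> x1 = 0" "y0 \<bullet> y1 = 0"
  shows "gram_det x0 y0 \<le> gram_det (x0 + x1) (y0 + y1)"
proof -
  have expand: "gram_det (x0 + x1) (y0 + y1) = gram_det x0 y0 + gram_det x1 y1
      + ((x0 \<bullet> x0) * (y1 \<bullet> y1) + (x1 \<bullet> x1) * (y0 \<bullet> y0) - 2 * (x0 \<bullet> y0) * (x1 \<bullet> y1))"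
    using assms by (simp add: gram_det_def inner_add_left inner_add_right inner_commute
        power2_eq_square algebra_simps)
  have "(x0 \<bullet> y0) * (x1 \<bullet> y1) \<le> (norm x0 * norm y1) * (norm x1 * norm y0)"
  proof -
    have "(x0 \<bullet> y0) * (x1 \<bullet> y1) \<le> \<bar>x0 \<bullet> y0\<bar> * \<bar>x1 \<bullet> y1\<bar>"
      by (metis abs_ge_self abs_mult)
    also have "\<dots> \<le> (norm x0 * norm y0) * (norm x1 * norm y1)"
      by (intro mult_mono Cauchy_Schwarz_ineq2) auto
    finally show ?thesis by (simp add: ac_simps)
  qed
  also have "2 * \<dots> \<le> (norm x0 * norm y1)^2 + (norm x1 * norm y0)^2"
    using sum_squares_ge_zero[of "norm x0 * norm y1 - norm x1 * norm y0" 0]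
    by (simp add: power2_eq_square algebra_simps)
  finally show ?thesis
    using gram_det_nonneg[of x1 y1]
    by (simp add: expand power_mult_distrib power2_norm_eq_inner)
qed

lemma schatten1_pair_ge_orthonormal:
  fixes q1 q2 x y :: "'a::real_inner"
  assumes "q1 \<bullet> q1 = 1" "q2 \<bullet> q2 = 1" "q1 \<bullet> q2 = 0"
  shows "q1 \<bullet> x + q2 \<bullet> y \<le> schatten1_pair x y"
proof -
  define a1 a2 b1 b2 where "a1 = q1 \<bullet> x" "a2 = q2 \<bullet> x" "b1 = q1 \<bullet> y" "b2 = q2 \<bullet> y"
  define x0 y0 where "x0 = a1 *\<^sub>R q1 + a2 *\<^sub>R q2" "y0 = b1 *\<^sub>R q1 + b2 *\<^sub>R q2"
  have q: "q1 \<bullet> q1 = 1" "q2 \<bullet> q2 = 1" "q1 \<bullet> q2 = 0" "q2 \<bullet> q1 = 0"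
    using assms by (simp_all add: inner_commute)
  have proj: "q \<bullet> (x - x0) = 0" "q \<bullet> (y - y0) = 0" if "q = q1 \<or> q = q2" for q
    using that q by (auto simp: x0_y0_def a1_a2_b1_b2_def inner_diff_right inner_add_right)
  have orth: "x0 \<bullet> (x - x0) = 0" "x0 \<bullet> (y - y0) = 0" "y0 \<bullet> (x - x0) = 0" "y0 \<bullet> (y - y0) = 0"
    using proj by (simp_all add: x0_y0_def inner_add_left)
  have "x \<bullet> x = x0 \<bullet> x0 + (x - x0) \<bullet> (x - x0)" "y \<bullet> y = y0 \<bullet> y0 + (y - y0) \<bullet> (y - y0)"
    using orth by (simp_all add: inner_diff_left inner_diff_right inner_commute)
  moreover have "x0 \<bullet> x0 = a1^2 + a2^2" "y0 \<bullet> y0 = b1^2 + b2^2"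
    using q by (simp_all add: x0_y0_def inner_add_left inner_add_right power2_eq_square)
  ultimately have bessel: "a1^2 + a2^2 \<le> x \<bullet> x" "b1^2 + b2^2 \<le> y \<bullet> y" by simp_all
  have "gram_det x0 y0 = (a1*b2 - a2*b1)^2"
    using q by (simp add: gram_det_def x0_y0_def inner_add_left inner_add_right
        power2_eq_square algebra_simps)
  moreover have "gram_det x0 y0 \<le> gram_det x y"
    using gram_det_le_orthogonal_sum[OF orth] by simp
  ultimately have "\<bar>a1*b2 - a2*b1\<bar> \<le> sqrt (gram_det x y)"
    using real_sqrt_le_mono by fastforce
  moreover have "2*(a2*b1) \<le> a2^2 + b1^2"
    using sum_squares_ge_zero[of "a2 - b1" 0] by (simp add: power2_eq_square algebra_simps)
  ultimately have "(a1 + b2)^2 \<le> x \<bullet> x + y \<bullet> y + 2 * sqrt (gram_det x y)"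
    using bessel by (simp add: power2_eq_square algebra_simps abs_if split: if_splits)
  then have "\<bar>a1 + b2\<bar> \<le> schatten1_pair x y"
    unfolding schatten1_pair_def using real_sqrt_le_mono by fastforce
  then show ?thesis by (simp add: a1_a2_b1_b2_def)
qed

lemma inner_pair_le_schatten1_pair:
  fixes a b x y :: "'a::real_inner"
  shows "a \<bullet> x + b \<bullet> y \<le> sqrt (a \<bullet> a + b \<bullet> b) * schatten1_pair x y"
proof -
  have "a \<bullet> x + b \<bullet> y = (a, b) \<bullet> (x, y)" by simp
  also have "\<dots> \<le> norm (a, b) * norm (x, y)" by (rule Cauchy_Schwarz_ineq2[THEN abs_le_D1])
  also have "\<dots> \<le> sqrt (a \<bullet> a + b \<bullet> b) * schatten1_pair x y"
    unfolding norm_eq_sqrt_inner inner_Pair schatten1_pair_def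
    by (intro mult_left_mono real_sqrt_le_mono) (auto simp: gram_det_nonneg)
  finally show ?thesis .
qed

text \<open>For \<open>gram_det x y > 0\<close>, \<open>polar_col x y\<close> and \<open>polar_col y x\<close> are the columns of the polar
  factor \<open>L (L\<^sup>T L)^(-1/2)\<close> of \<open>L = [x y]\<close>: by Cayley--Hamilton,
  \<open>(L\<^sup>T L)^(1/2) = (L\<^sup>T L + sqrt (gram_det x y) I) / \<parallel>L\<parallel>\<^sub>1\<close>.\<close>

definition polar_col :: "'a::real_inner \<Rightarrow> 'a \<Rightarrow> 'a" where
  "polar_col x y = (1 / (sqrt (gram_det x y) * schatten1_pair x y)) *\<^sub>R
     ((y \<bullet> y + sqrt (gram_det x y)) *\<^sub>R x - (x \<bullet> y) *\<^sub>R y)"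

lemma polar_col_inner:
  "polar_col x y \<bullet> z = ((y \<bullet> y + sqrt (gram_det x y)) * (x \<bullet> z) - (x \<bullet> y) * (y \<bullet> z))
     / (sqrt (gram_det x y) * schatten1_pair x y)"
  by (simp add: polar_col_def inner_diff_left divide_simps)

lemma schatten1_pair_pos_sq:
  assumes "0 < gram_det x y"
  shows "0 < schatten1_pair x y"
    and "(schatten1_pair x y)^2 = x \<bullet> x + y \<bullet> y + 2 * sqrt (gram_det x y)"
proof -
  have "0 < x \<bullet> x + y \<bullet> y + 2 * sqrt (gram_det x y)"
    using assms by (simp add: add_nonneg_pos)
  then show "0 < schatten1_pair x y"
    and "(schatten1_pair x y)^2 = x \<bullet> x + y \<bullet> y + 2 * sqrt (gram_det x y)"
    by (simp_all add: schatten1_pair_def)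
qed

lemma polar_col_orthonormal:
  fixes x y :: "'a::real_inner"
  assumes G: "0 < gram_det x y"
  shows "polar_col x y \<bullet> polar_col x y = 1"
    and "polar_col x y \<bullet> polar_col y x = 0"
    and "polar_col x y \<bullet> x + polar_col y x \<bullet> y = schatten1_pair x y"
proof -
  define d t where "d = sqrt (gram_det x y)" "t = schatten1_pair x y"
  define A B C where "A = x \<bullet> x" "B = y \<bullet> y" "C = x \<bullet> y"
  have dt: "0 < d" "0 < t" using G schatten1_pair_pos_sq(1)[OF G] by (simp_all add: d_t_def)
  have d2: "d^2 = A*B - C^2"
    using G by (simp add: d_t_def A_B_C_def gram_det_def)
  have t2: "t^2 = A + B + 2*d"
    using schatten1_pair_pos_sq(2)[OF G] by (simp add: d_t_def A_B_C_def)
  have q1: "polar_col x y \<bullet> z = ((B + d) * (x \<bullet> z) - C * (y \<bullet> z)) / (d*t)" for z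
    by (simp add: polar_col_inner d_t_def A_B_C_def)
  have q2: "polar_col y x \<bullet> z = ((A + d) * (y \<bullet> z) - C * (x \<bullet> z)) / (d*t)" for z
    using polar_col_inner[of y x z]
    by (simp add: d_t_def A_B_C_def gram_det_commute schatten1_pair_commute inner_commute[of y x])
  have ips: "x \<bullet> polar_col x y = ((B + d)*A - C*C) / (d*t)"
      "y \<bullet> polar_col x y = d*C / (d*t)"
      "x \<bullet> polar_col y x = d*C / (d*t)"
      "y \<bullet> polar_col y x = ((A + d)*B - C*C) / (d*t)"
    by (simp_all add: inner_commute[of _ "polar_col _ _"] q1 q2)
      (simp_all add: A_B_C_def inner_commute[of y x] algebra_simps)
  have q1q1: "polar_col x y \<bullet> polar_col x y = ((B + d)*((B + d)*A - C*C) - C*(d*C)) / (d*t)^2"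
    and q1q2: "polar_col x y \<bullet> polar_col y x = ((B + d)*(d*C) - C*((A + d)*B - C*C)) / (d*t)^2"
    using dt by (simp_all add: q1 ips power2_eq_square field_simps)
  have "(B + d)*((B + d)*A - C*C) - C*(d*C) = (d*t)^2"
    using d2 t2 unfolding power_mult_distrib by algebra
  then show "polar_col x y \<bullet> polar_col x y = 1" using dt by (simp add: q1q1)
  have "(B + d)*(d*C) - C*((A + d)*B - C*C) = 0"
    using d2 by algebra
  then show "polar_col x y \<bullet> polar_col y x = 0" by (simp add: q1q2)
  have "polar_col x y \<bullet> x + polar_col y x \<bullet> y = ((B + d)*A - C*C + ((A + d)*B - C*C)) / (d*t)"
    using ips dt by (simp add: inner_commute[of "polar_col _ _"] field_simps)
  also have "(B + d)*A - C*C + ((A + d)*B - C*C) = d*t*t"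
    using d2 t2 by algebra
  finally show "polar_col x y \<bullet> x + polar_col y x \<bullet> y = schatten1_pair x y"
    using dt by (simp add: d_t_def)
qed

lemma schatten1_pair_ge_polar:
  fixes x y :: "'a::real_inner"
  assumes "0 < gram_det x y"
  shows "polar_col x y \<bullet> v + polar_col y x \<bullet> w \<le> schatten1_pair v w"
proof (rule schatten1_pair_ge_orthonormal)
  show "polar_col y x \<bullet> polar_col y x = 1"
    using assms polar_col_orthonormal(1)[of y x] by (simp add: gram_det_commute)
qed (use polar_col_orthonormal(1,2)[OF assms] in auto)

text \<open>The quantity below is \<open>trace (X N)\<close> for \<open>X = [[x11, -x12], [-x12, x22]]\<close> and
  \<open>N = [[n11, n12], [n12, n22]]\<close>.\<close>

lemma pos_def_psd_pairing_2:
  fixes x11 x12 x22 n11 n12 n22 :: real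
  assumes "0 < x11" "0 < x22" "x12^2 < x11*x22" "0 \<le> n11" "0 \<le> n22" "n12^2 \<le> n11*n22"
  shows "0 \<le> x11*n11 - 2*x12*n12 + x22*n22"
    and "0 < n11 \<or> 0 < n22 \<Longrightarrow> 0 < x11*n11 - 2*x12*n12 + x22*n22"
proof -
  define P where "P = x11*n11 + x22*n22"
  have "0 \<le> P" using assms by (simp add: P_def)
  have am_gm: "4*(x11*x22)*(n11*n22) \<le> P^2"
    using sum_squares_ge_zero[of "x11*n11 - x22*n22" 0] by (simp add: P_def power2_eq_square algebra_simps)
  have "(2*x12*n12)^2 = 4*(x12^2)*(n12^2)" by (simp add: power_mult_distrib)
  also have "\<dots> \<le> 4*(x11*x22)*(n11*n22)"
    using mult_mono[OF less_imp_le[OF assms(3)] assms(6)] assms by simp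
  finally have "(2*x12*n12)^2 \<le> P^2" using am_gm by linarith
  then have "2*x12*n12 \<le> P" using \<open>0 \<le> P\<close> by (rule power2_le_imp_le)
  then show "0 \<le> x11*n11 - 2*x12*n12 + x22*n22" by (simp add: P_def)
  assume "0 < n11 \<or> 0 < n22"
  show "0 < x11*n11 - 2*x12*n12 + x22*n22"
  proof (cases "n11*n22 = 0")
    case True
    then have "n12^2 \<le> 0" using assms(6) by linarith
    then have "n12 = 0" by simp
    moreover have "0 < x11*n11 + x22*n22"
      using \<open>0 < n11 \<or> 0 < n22\<close> assms by (auto intro: add_pos_nonneg add_nonneg_pos)
    ultimately show ?thesis by simp
  next
    case False
    then have "0 < n11*n22" using assms by (simp add: zero_less_mult_iff)
    have "(x12^2)*(n12^2) \<le> (x12^2)*(n11*n22)" using assms(6) by (simp add: mult_left_mono)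
    also have "\<dots> < (x11*x22)*(n11*n22)"
      using assms(3) \<open>0 < n11*n22\<close> by (rule mult_strict_right_mono)
    finally have "(2*x12*n12)^2 < P^2" using am_gm by (simp add: power_mult_distrib)
    then have "2*x12*n12 < P" using \<open>0 \<le> P\<close> by (rule power_less_imp_less_base)
    then show ?thesis by (simp add: P_def)
  qed
qed

lemma polar_col_pairing_psd:
  fixes x y :: "real^'n" and M :: "real^'n^'n"
  assumes G: "0 < gram_det x y" and M: "psd_matrix M"
  shows "0 \<le> polar_col x y \<bullet> (M *v x) + polar_col y x \<bullet> (M *v y)"
    and "M *v x \<noteq> 0 \<or> M *v y \<noteq> 0 \<Longrightarrow> 0 < polar_col x y \<bullet> (M *v x) + polar_col y x \<bullet> (M *v y)"
proof -
  define d t where "d = sqrt (gram_det x y)" "t = schatten1_pair x y"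
  have dt: "0 < d*t" using G schatten1_pair_pos_sq(1)[OF G] by (simp add: d_t_def)
  let ?x11 = "y \<bullet> y + d" and ?x22 = "x \<bullet> x + d" and ?x12 = "x \<bullet> y"
  let ?n11 = "x \<bullet> (M *v x)" and ?n22 = "y \<bullet> (M *v y)" and ?n12 = "x \<bullet> (M *v y)"
  have pairing_eq: "polar_col x y \<bullet> (M *v x) + polar_col y x \<bullet> (M *v y)
      = (?x11*?n11 - 2*?x12*?n12 + ?x22*?n22) / (d*t)"
    using symmetric_matrix_inner_commute[OF psd_matrix_symmetric[OF M], of y x]
    by (simp add: polar_col_inner gram_det_commute schatten1_pair_commute inner_commute[of y x]
        d_t_def diff_divide_distrib add_divide_distrib mult_ac)
  have "0 < d" using G by (simp add: d_t_def)
  then have x11: "0 < ?x11" and x22: "0 < ?x22" by (simp_all add: add_nonneg_pos)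
  have "?x11*?x22 - ?x12^2 = 2*d^2 + d*(x \<bullet> x + y \<bullet> y)"
    using gram_det_nonneg[of x y] by (simp add: d_t_def gram_det_def algebra_simps power2_eq_square)
  moreover have "0 < 2*d^2 + d*(x \<bullet> x + y \<bullet> y)"
    using \<open>0 < d\<close> by (intro add_pos_nonneg) auto
  ultimately have x12: "?x12^2 < ?x11*?x22" by linarith
  have n11: "0 \<le> ?n11" and n22: "0 \<le> ?n22" using M by (simp_all add: psd_matrix_nonneg)
  have n12: "?n12^2 \<le> ?n11*?n22" using M by (rule psd_matrix_Cauchy_Schwarz)
  note pairing = pos_def_psd_pairing_2[OF x11 x22 x12 n11 n22 n12]
  show "0 \<le> polar_col x y \<bullet> (M *v x) + polar_col y x \<bullet> (M *v y)"
    unfolding pairing_eq using pairing(1) dt by simp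
  assume "M *v x \<noteq> 0 \<or> M *v y \<noteq> 0"
  then have "0 < ?n11 \<or> 0 < ?n22"
    using psd_matrix_quadratic_eq_0D[OF M, of x] psd_matrix_quadratic_eq_0D[OF M, of y] n11 n22
    by linarith
  then show "0 < polar_col x y \<bullet> (M *v x) + polar_col y x \<bullet> (M *v y)"
    unfolding pairing_eq using pairing(2) dt by simp
qed

lemma schatten1_pair_support:
  fixes x y :: "real^'n" and M :: "real^'n^'n"
  assumes M: "psd_matrix M"
  obtains q1 q2 where "\<And>v w. q1 \<bullet> v + q2 \<bullet> w \<le> schatten1_pair v w"
    and "q1 \<bullet> x + q2 \<bullet> y = schatten1_pair x y"
    and "0 \<le> q1 \<bullet> (M *v x) + q2 \<bullet> (M *v y)"
proof (cases "0 < gram_det x y")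
  case True
  show ?thesis
    using that schatten1_pair_ge_polar[OF True] polar_col_orthonormal(3)[OF True]
      polar_col_pairing_psd(1)[OF True M] by blast
next
  case False
  then have degenerate: "gram_det x y = 0" using gram_det_nonneg[of x y] by linarith
  show ?thesis
  proof (cases "x \<bullet> x + y \<bullet> y = 0")
    case True
    then have "x = 0" "y = 0" by (simp_all add: add_nonneg_eq_0_iff)
    moreover have "schatten1_pair 0 0 = 0" by (simp add: schatten1_pair_def gram_det_def)
    ultimately show ?thesis using that[of 0 0] by (simp add: schatten1_pair_nonneg)
  next
    case False
    \<comment> \<open>in rank one the trace norm is the Frobenius norm, supported by the normalised map\<close>
    define f where "f = sqrt (x \<bullet> x + y \<bullet> y)"
    have "0 < f" using False by (simp add: f_def add_nonneg_nonneg order_le_neq_trans)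
    have "(1/f) *\<^sub>R x \<bullet> v + (1/f) *\<^sub>R y \<bullet> w \<le> schatten1_pair v w" for v w
      using inner_pair_le_schatten1_pair[of x v y w] \<open>0 < f\<close>
      by (simp add: f_def divide_simps mult.commute)
    moreover have "(1/f) *\<^sub>R x \<bullet> x + (1/f) *\<^sub>R y \<bullet> y = schatten1_pair x y"
      using \<open>0 < f\<close> degenerate
      by (simp add: f_def schatten1_pair_def divide_simps flip: real_sqrt_mult)
    moreover have "0 \<le> (1/f) *\<^sub>R x \<bullet> (M *v x) + (1/f) *\<^sub>R y \<bullet> (M *v y)"
      using \<open>0 < f\<close> M by (simp add: psd_matrix_nonneg)
    ultimately show ?thesis by (rule that)
  qed
qed

lemma has_vector_derivative_inner:
  fixes f g :: "real \<Rightarrow> 'a::real_inner"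
  assumes "(f has_vector_derivative f') (at x within S)" "(g has_vector_derivative g') (at x within S)"
  shows "((\<lambda>r. f r \<bullet> g r) has_real_derivative f x \<bullet> g' + f' \<bullet> g x) (at x within S)"
  using has_derivative_inner[OF assms[unfolded has_vector_derivative_def]]
  unfolding has_field_derivative_def
  by (rule has_derivative_eq_rhs) (auto simp: algebra_simps fun_eq_iff)

lemma has_vector_derivative_inner_const:
  fixes f :: "real \<Rightarrow> 'a::real_inner"
  assumes "(f has_vector_derivative f') (at x within S)"
  shows "((\<lambda>r. q \<bullet> f r) has_real_derivative q \<bullet> f') (at x within S)"
  using has_vector_derivative_inner[OF has_vector_derivative_const assms, of q] by simp

lemma differentiable_sqrt:
  fixes f :: "real \<Rightarrow> real"
  assumes "f differentiable (at x within S)" "0 < f x"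
  shows "(\<lambda>r. sqrt (f r)) differentiable (at x within S)"
  using assms by (auto simp: real_differentiable_def intro: DERIV_chain2[OF DERIV_real_sqrt])

lemma schatten1_pair_has_derivative:
  fixes a b :: "real \<Rightarrow> 'a::real_inner"
  assumes a: "(a has_vector_derivative a') (at x within S)"
    and b: "(b has_vector_derivative b') (at x within S)"
    and G: "0 < gram_det (a x) (b x)"
  shows "((\<lambda>r. schatten1_pair (a r) (b r)) has_real_derivative
           polar_col (a x) (b x) \<bullet> a' + polar_col (b x) (a x) \<bullet> b') (at x within S)"
proof -
  define A B C where "A = a x \<bullet> a x" "B = b x \<bullet> b x" "C = a x \<bullet> b x"
  define d t where "d = sqrt (gram_det (a x) (b x))" "t = schatten1_pair (a x) (b x)"
  define dG where "dG = 2*(a x \<bullet> a')*B + 2*A*(b x \<bullet> b') - 2*C*(a' \<bullet> b x + a x \<bullet> b')"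
  have "0 < d" "0 < t" using G schatten1_pair_pos_sq(1)[OF G] by (simp_all add: d_t_def)
  have "((\<lambda>r. gram_det (a r) (b r)) has_real_derivative dG) (at x within S)"
    unfolding gram_det_def
    by (rule derivative_eq_intros has_vector_derivative_inner[OF a a]
        has_vector_derivative_inner[OF b b] has_vector_derivative_inner[OF a b] refl)+
      (simp add: dG_def A_B_C_def algebra_simps inner_commute)
  from DERIV_chain2[OF DERIV_real_sqrt[OF G] this]
  have dsqrt: "((\<lambda>r. sqrt (gram_det (a r) (b r))) has_real_derivative dG / (2*d)) (at x within S)"
    by (simp add: d_t_def divide_simps mult.commute)
  have "((\<lambda>r. a r \<bullet> a r + b r \<bullet> b r + 2 * sqrt (gram_det (a r) (b r))) has_real_derivative
      2*(a x \<bullet> a') + 2*(b x \<bullet> b') + 2*(dG / (2*d))) (at x within S)"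
    by (rule derivative_eq_intros has_vector_derivative_inner[OF a a]
        has_vector_derivative_inner[OF b b] dsqrt refl)+ (simp add: inner_commute)
  from DERIV_chain2[OF DERIV_real_sqrt this] G
  have "((\<lambda>r. schatten1_pair (a r) (b r)) has_real_derivative
      (2*(a x \<bullet> a') + 2*(b x \<bullet> b') + 2*(dG / (2*d))) / (2*t)) (at x within S)"
    by (simp add: schatten1_pair_def d_t_def add_nonneg_pos divide_simps mult.commute)
  moreover have "(2*(a x \<bullet> a') + 2*(b x \<bullet> b') + 2*(dG / (2*d))) / (2*t)
      = polar_col (a x) (b x) \<bullet> a' + polar_col (b x) (a x) \<bullet> b'"
    using \<open>0 < d\<close> \<open>0 < t\<close> polar_col_inner[of "a x" "b x" a'] polar_col_inner[of "b x" "a x" b']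
    by (simp add: gram_det_commute schatten1_pair_commute A_B_C_def d_t_def dG_def
        inner_commute field_simps)
  ultimately show ?thesis by simp
qed

lemma differentiable_polar_col:
  fixes a b :: "real \<Rightarrow> 'a::real_inner"
  assumes "a differentiable (at x within S)" "b differentiable (at x within S)"
    and G: "0 < gram_det (a x) (b x)"
  shows "(\<lambda>r. polar_col (a r) (b r)) differentiable (at x within S)"
proof -
  have "0 < a x \<bullet> a x + b x \<bullet> b x + 2 * sqrt (gram_det (a x) (b x))"
    using G by (simp add: add_nonneg_pos)
  then show ?thesis
    using G schatten1_pair_pos_sq(1)[OF G] unfolding polar_col_def schatten1_pair_def gram_det_def
    by (intro differentiable_scaleR differentiable_divide differentiable_diff differentiable_add
        differentiable_mult differentiable_inner differentiable_power differentiable_sqrt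
        differentiable_const assms) (auto simp: schatten1_pair_def gram_det_def)
qed

section \<open>Second-order supports and convexity\<close>

lemma mvt_open_segment:
  fixes h :: "real \<Rightarrow> real"
  assumes "x \<noteq> y"
    and h: "\<And>r. r \<in> closed_segment x y \<Longrightarrow>
      (h has_real_derivative h' r) (at r within closed_segment x y)"
  obtains \<xi> where "\<xi> \<in> open_segment x y" "h y - h x = h' \<xi> * (y - x)"
proof (cases "x < y")
  case True
  have "\<exists>\<xi>\<in>{x<..<y}. h y - h x = h' \<xi> * (y - x)"
    using h True
    by (intro mvt_simple[OF True]) (auto simp: closed_segment_eq_real_ivl has_field_derivative_def)
  then show ?thesis using that True by (auto simp: open_segment_eq_real_ivl)
next
  case False
  with \<open>x \<noteq> y\<close> have "y < x" by simp
  have "\<exists>\<xi>\<in>{y<..<x}. h x - h y = h' \<xi> * (x - y)"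
    using h \<open>y < x\<close>
    by (intro mvt_simple[OF \<open>y < x\<close>])
      (auto simp: closed_segment_eq_real_ivl has_field_derivative_def)
  then show ?thesis using that \<open>y < x\<close> by (force simp: open_segment_eq_real_ivl algebra_simps)
qed

lemma second_derivative_nonneg_at_local_min:
  fixes h h' :: "real \<Rightarrow> real"
  assumes "a < b" and s: "s \<in> {a..b}" and "0 < e"
    and min: "\<And>r. r \<in> ball s e \<inter> {a..b} \<Longrightarrow> h s \<le> h r"
    and h: "\<And>r. r \<in> ball s e \<inter> {a..b} \<Longrightarrow> (h has_real_derivative h' r) (at r within {a..b})"
    and "h' s = 0"
    and h': "(h' has_real_derivative c) (at s within {a..b})"
  shows "0 \<le> c"
proof (rule ccontr)
  assume "\<not> 0 \<le> c"
  have "((\<lambda>r. (h' r - h' s) / (r - s)) \<longlongrightarrow> c) (at s within {a..b})"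
    using h' by (simp add: has_field_derivative_iff)
  moreover have "c < 0" using \<open>\<not> 0 \<le> c\<close> by simp
  ultimately have "eventually (\<lambda>r. (h' r - h' s) / (r - s) < 0) (at s within {a..b})"
    by (rule order_tendstoD(2))
  then obtain \<delta> where "0 < \<delta>"
    and neg: "\<And>r. r \<in> {a..b} \<Longrightarrow> r \<noteq> s \<Longrightarrow> dist r s < \<delta> \<Longrightarrow> h' r / (r - s) < 0"
    unfolding eventually_at using \<open>h' s = 0\<close> by auto
  define \<rho> where "\<rho> = min (min \<delta> e) (b - a) / 2"
  define y where "y = (if s < b then min (s + \<rho>) b else s - \<rho>)"
  have \<rho>: "0 < \<rho>" "\<rho> < \<delta>" "\<rho> < e" "\<rho> < b - a"
    using \<open>0 < \<delta>\<close> \<open>0 < e\<close> \<open>a < b\<close> by (auto simp: \<rho>_def)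
  then have y: "y \<in> {a..b}" "y \<noteq> s" "\<bar>y - s\<bar> \<le> \<rho>"
    using s by (auto simp: y_def)
  have segment: "closed_segment s y \<subseteq> ball s e \<inter> {a..b}"
  proof -
    have "y \<in> ball s e" using y \<rho> by (auto simp: dist_real_def)
    then show ?thesis using y s \<open>0 < e\<close> by (simp add: closed_segment_subset)
  qed
  obtain \<xi> where \<xi>: "\<xi> \<in> open_segment s y" and mvt: "h y - h s = h' \<xi> * (y - s)"
  proof (rule mvt_open_segment[OF y(2)[symmetric]])
    show "(h has_real_derivative h' r) (at r within closed_segment s y)"
      if "r \<in> closed_segment s y" for r
      using h[of r] that segment by (blast intro: DERIV_subset)
  qed
  have same_side: "0 < (\<xi> - s) * (y - s)" and "\<bar>\<xi> - s\<bar> < \<bar>y - s\<bar>"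
    using \<xi> by (auto simp: open_segment_eq_real_ivl mult_pos_pos mult_neg_neg split: if_splits)
  moreover have "\<xi> \<in> {a..b}" using \<xi> segment by (auto dest: open_closed_segment)
  ultimately have "h' \<xi> / (\<xi> - s) < 0"
    using y \<rho> by (intro neg) (auto simp: dist_real_def)
  then have "h' \<xi> * (y - s) < 0"
    using same_side by (auto simp: divide_less_0_iff zero_less_mult_iff mult_less_0_iff)
  moreover have "h s \<le> h y" using min y segment by auto
  ultimately show False using mvt by simp
qed

definition second_order_support :: "(real \<Rightarrow> real) \<Rightarrow> real set \<Rightarrow> real \<Rightarrow> bool" where
  "second_order_support u S m \<longleftrightarrow> (\<exists>l l' l''. (\<forall>r\<in>S. l r \<le> u r) \<and> l m = u m
     \<and> (\<forall>r\<in>S. (l has_real_derivative l' r) (at r within S))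
     \<and> (l' has_real_derivative l'') (at m within S) \<and> 0 \<le> l'')"

lemma second_order_support_local_max:
  fixes u \<phi> \<phi>' :: "real \<Rightarrow> real"
  assumes supp: "second_order_support u {a..b} m" and m: "m \<in> {a<..<b}" and "0 < e"
    and max: "\<And>r. r \<in> ball m e \<inter> {a..b} \<Longrightarrow> u r - \<phi> r \<le> u m - \<phi> m"
    and \<phi>: "\<And>r. r \<in> {a..b} \<Longrightarrow> (\<phi> has_real_derivative \<phi>' r) (at r within {a..b})"
    and \<phi>': "(\<phi>' has_real_derivative c) (at m within {a..b})"
  shows "0 \<le> c"
proof -
  obtain l l' l'' where lu: "\<And>r. r \<in> {a..b} \<Longrightarrow> l r \<le> u r" and "l m = u m"
    and l: "\<And>r. r \<in> {a..b} \<Longrightarrow> (l has_real_derivative l' r) (at r within {a..b})"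
    and l': "(l' has_real_derivative l'') (at m within {a..b})" and "0 \<le> l''"
    using supp unfolding second_order_support_def by blast
  define k where "k r = l r - \<phi> r" for r
  have "a < b" using m by simp
  have k_max: "k r \<le> k m" if "r \<in> ball m e \<inter> {a..b}" for r
    using lu[of r] max[OF that] that \<open>l m = u m\<close> by (simp add: k_def)
  have dk: "(k has_real_derivative l' r - \<phi>' r) (at r within {a..b})" if "r \<in> {a..b}" for r
    unfolding k_def using l[OF that] \<phi>[OF that] by (rule DERIV_diff)
  have "l' m - \<phi>' m = 0"
  proof (rule DERIV_local_max)
    show "(k has_real_derivative l' m - \<phi>' m) (at m)"
      using dk[of m] m at_within_interior[of m "{a..b}"] by simp
    show "0 < min e (min (m - a) (b - m))" using \<open>0 < e\<close> m by simp
    show "\<forall>r. \<bar>m - r\<bar> < min e (min (m - a) (b - m)) \<longrightarrow> k r \<le> k m"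
      using k_max by (auto simp: dist_real_def abs_less_iff)
  qed
  have "0 \<le> c - l''"
  proof (rule second_derivative_nonneg_at_local_min
      [OF \<open>a < b\<close> _ \<open>0 < e\<close>, of m "\<lambda>r. k m - k r" "\<lambda>r. \<phi>' r - l' r"])
    show "m \<in> {a..b}" using m by simp
    show "k m - k m \<le> k m - k r" if "r \<in> ball m e \<inter> {a..b}" for r
      using k_max[OF that] by simp
    show "((\<lambda>r. k m - k r) has_real_derivative \<phi>' r - l' r) (at r within {a..b})"
      if "r \<in> ball m e \<inter> {a..b}" for r
      using DERIV_diff[OF DERIV_const dk[of r]] that by simp
    show "\<phi>' m - l' m = 0" using \<open>l' m - \<phi>' m = 0\<close> by simp
    show "((\<lambda>r. \<phi>' r - l' r) has_real_derivative c - l'') (at m within {a..b})"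
      using \<phi>' l' by (rule DERIV_diff)
  qed
  then show ?thesis using \<open>0 \<le> l''\<close> by simp
qed

lemma below_chord_if_second_order_support:
  fixes u :: "real \<Rightarrow> real"
  assumes cont: "continuous_on {a..b} u"
    and supp: "\<And>m. m \<in> {a<..<b} \<Longrightarrow> second_order_support u {a..b} m"
    and xy: "a \<le> x" "x < y" "y \<le> b" and z: "z \<in> {x..y}"
  shows "u z \<le> u x + (u y - u x) / (y - x) * (z - x)"
proof (rule ccontr)
  define \<kappa> where "\<kappa> = (u y - u x) / (y - x)"
  define \<eta> where "\<eta> = u z - (u x + \<kappa> * (z - x))"
  assume "\<not> ?thesis"
  then have "0 < \<eta>" by (simp add: \<eta>_def \<kappa>_def)
  \<comment> \<open>perturb the chord into a strictly concave \<open>\<phi>\<close> that still lies below \<open>u\<close> at \<open>z\<close>\<close>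
  define \<epsilon> where "\<epsilon> = \<eta> / (2 * (y - x)^2)"
  define \<phi> where "\<phi> r = u x + \<kappa> * (r - x) - \<epsilon> * ((r - x) * (r - y))" for r
  have "0 < \<epsilon>" using \<open>0 < \<eta>\<close> xy by (simp add: \<epsilon>_def)
  have "- ((y - x)^2) \<le> (z - x) * (z - y)"
    using z mult_mono[of "z - x" "y - x" "y - z" "y - x"] by (simp add: power2_eq_square algebra_simps)
  then have "- (\<eta> / 2) \<le> \<epsilon> * ((z - x) * (z - y))"
    using \<open>0 < \<epsilon>\<close> xy mult_left_mono[of "- ((y - x)^2)" "(z - x) * (z - y)" \<epsilon>]
    by (simp add: \<epsilon>_def)
  moreover have "u z - \<phi> z = \<eta> + \<epsilon> * ((z - x) * (z - y))" by (simp add: \<phi>_def \<eta>_def)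
  ultimately have "0 < u z - \<phi> z" using \<open>0 < \<eta>\<close> by linarith
  have cont_diff: "continuous_on {x..y} (\<lambda>r. u r - \<phi> r)"
    unfolding \<phi>_def by (intro continuous_intros continuous_on_subset[OF cont]) (use xy in auto)
  obtain m where m: "m \<in> {x..y}" and m_max: "\<And>r. r \<in> {x..y} \<Longrightarrow> u r - \<phi> r \<le> u m - \<phi> m"
    using continuous_attains_sup[OF compact_Icc _ cont_diff] xy by auto
  have "u x - \<phi> x = 0" "u y - \<phi> y = 0" using xy by (simp_all add: \<phi>_def \<kappa>_def)
  moreover have "0 < u m - \<phi> m" using m_max[OF z] \<open>0 < u z - \<phi> z\<close> by simp
  ultimately have "m \<noteq> x" "m \<noteq> y" by auto
  then have "m \<in> {x<..<y}" using m by auto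
  have "0 \<le> - 2 * \<epsilon>"
  proof (rule second_order_support_local_max)
    show "second_order_support u {a..b} m" "m \<in> {a<..<b}"
      using supp \<open>m \<in> {x<..<y}\<close> xy by auto
    show "0 < min (m - x) (y - m)" using \<open>m \<in> {x<..<y}\<close> by simp
    show "u r - \<phi> r \<le> u m - \<phi> m" if "r \<in> ball m (min (m - x) (y - m)) \<inter> {a..b}" for r
      using that by (intro m_max) (auto simp: dist_real_def)
    show "(\<phi> has_real_derivative \<kappa> - \<epsilon> * (2 * r - x - y)) (at r within {a..b})" for r
      unfolding \<phi>_def by (rule derivative_eq_intros refl)+ (simp add: algebra_simps)
    show "((\<lambda>r. \<kappa> - \<epsilon> * (2 * r - x - y)) has_real_derivative - 2 * \<epsilon>) (at m within {a..b})"
      by (rule derivative_eq_intros refl)+ simp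
  qed
  then show False using \<open>0 < \<epsilon>\<close> by simp
qed

lemma convex_on_Icc_if_second_order_support:
  fixes u :: "real \<Rightarrow> real"
  assumes "continuous_on {a..b} u"
    and "\<And>m. m \<in> {a<..<b} \<Longrightarrow> second_order_support u {a..b} m"
  shows "convex_on {a..b} u"
proof (rule convex_on_linorderI)
  fix t x y :: real
  assume t: "0 < t" "t < 1" and "x \<in> {a..b}" "y \<in> {a..b}" "x < y"
  have "0 \<le> t * (y - x)" "t * (y - x) \<le> y - x"
    using t \<open>x < y\<close> by (simp_all add: mult_left_le_one_le)
  then have "(1 - t) * x + t * y \<in> {x..y}" by (simp add: algebra_simps)
  then have "u ((1 - t) * x + t * y) \<le> u x + (u y - u x) / (y - x) * ((1 - t) * x + t * y - x)"
    using assms \<open>x \<in> {a..b}\<close> \<open>y \<in> {a..b}\<close> \<open>x < y\<close>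
    by (intro below_chord_if_second_order_support) auto
  also have "\<dots> = (1 - t) * u x + t * u y" using \<open>x < y\<close> by (simp add: field_simps)
  finally show "u ((1 - t) *\<^sub>R x + t *\<^sub>R y) \<le> (1 - t) * u x + t * u y" by simp
qed simp

section \<open>The trace norm along solutions of \<open>T'' = A T\<close>\<close>

lemma column_matrix_mult: "column j (A ** B) = A *v column j B"
  by (simp add: column_def matrix_matrix_mult_def matrix_vector_mult_def vec_eq_iff)

lemma bounded_linear_column: "bounded_linear (\<lambda>L :: real^'n^'m. column j L)"
  by (rule linear_conv_bounded_linear[THEN iffD1]) (auto simp: linear_iff column_def vec_eq_iff)

lemma has_vector_derivative_column:
  fixes f :: "real \<Rightarrow> real^'n^'m"
  shows "(f has_vector_derivative f') F \<Longrightarrow> ((\<lambda>t. column j (f t)) has_vector_derivative column j f') F"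
  by (rule bounded_linear.has_vector_derivative[OF bounded_linear_column])

lemma matrix_2_eq_0_iff_columns:
  fixes L :: "real^2^'m"
  shows "L = 0 \<longleftrightarrow> column 1 L = 0 \<and> column 2 L = 0"
  by (auto simp: column_def vec_eq_iff forall_2)

locale psd_matrix_ode =
  fixes a b :: real and T T' :: "real \<Rightarrow> real^2^'m" and A :: "real \<Rightarrow> real^'m^'m"
  assumes T: "\<And>t. t \<in> {a..b} \<Longrightarrow> (T has_vector_derivative T' t) (at t within {a..b})"
    and T': "\<And>t. t \<in> {a..b} \<Longrightarrow> (T' has_vector_derivative A t ** T t) (at t within {a..b})"
    and psd: "\<And>t. t \<in> {a..b} \<Longrightarrow> psd_matrix (A t)"
begin

lemma column_ode:
  assumes "t \<in> {a..b}"
  shows "((\<lambda>r. column j (T r)) has_vector_derivative column j (T' t)) (at t within {a..b})"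
    and "((\<lambda>r. column j (T' r)) has_vector_derivative A t *v column j (T t)) (at t within {a..b})"
  using has_vector_derivative_column[OF T[OF assms]] has_vector_derivative_column[OF T'[OF assms]]
  by (simp_all add: column_matrix_mult)

lemma continuous_on_schatten1: "continuous_on {a..b} (\<lambda>t. schatten1 (T t))"
proof -
  have "continuous_on {a..b} (\<lambda>t. column j (T t))" for j
    unfolding continuous_on_eq_continuous_within
    using has_vector_derivative_continuous[OF column_ode(1)] by blast
  then show ?thesis
    unfolding schatten1_eq_schatten1_pair schatten1_pair_def gram_det_def
    by (intro continuous_intros)
qed

lemma schatten1_second_order_support:
  assumes m: "m \<in> {a..b}"
  shows "second_order_support (\<lambda>t. schatten1 (T t)) {a..b} m"
proof -
  obtain q1 q2 where le: "\<And>x y. q1 \<bullet> x + q2 \<bullet> y \<le> schatten1_pair x y"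
    and eq: "q1 \<bullet> column 1 (T m) + q2 \<bullet> column 2 (T m) = schatten1 (T m)"
    and curv: "0 \<le> q1 \<bullet> (A m *v column 1 (T m)) + q2 \<bullet> (A m *v column 2 (T m))"
    using schatten1_pair_support[OF psd[OF m]] by (metis schatten1_eq_schatten1_pair)
  show ?thesis
    unfolding second_order_support_def
  proof (intro exI conjI ballI)
    show "q1 \<bullet> column 1 (T r) + q2 \<bullet> column 2 (T r) \<le> schatten1 (T r)" for r
      using le by (simp add: schatten1_eq_schatten1_pair)
    show "((\<lambda>r. q1 \<bullet> column 1 (T r) + q2 \<bullet> column 2 (T r)) has_real_derivative
        q1 \<bullet> column 1 (T' r) + q2 \<bullet> column 2 (T' r)) (at r within {a..b})" if "r \<in> {a..b}" for r
      using that by (intro DERIV_add has_vector_derivative_inner_const column_ode)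
    show "((\<lambda>r. q1 \<bullet> column 1 (T' r) + q2 \<bullet> column 2 (T' r)) has_real_derivative
        q1 \<bullet> (A m *v column 1 (T m)) + q2 \<bullet> (A m *v column 2 (T m))) (at m within {a..b})"
      using m by (intro DERIV_add has_vector_derivative_inner_const column_ode)
  qed (use eq curv in auto)
qed

lemma convex_on_schatten1: "convex_on {a..b} (\<lambda>t. schatten1 (T t))"
  using continuous_on_schatten1 schatten1_second_order_support
  by (intro convex_on_Icc_if_second_order_support) auto

definition schatten1_deriv :: "real \<Rightarrow> real" where
  "schatten1_deriv t = polar_col (column 1 (T t)) (column 2 (T t)) \<bullet> column 1 (T' t)
     + polar_col (column 2 (T t)) (column 1 (T t)) \<bullet> column 2 (T' t)"

lemma gram_det_pos_near:
  assumes s: "s \<in> {a..b}" and G: "0 < gram_det (column 1 (T s)) (column 2 (T s))"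
  obtains e where "0 < e" "\<And>t. t \<in> ball s e \<inter> {a..b} \<Longrightarrow> 0 < gram_det (column 1 (T t)) (column 2 (T t))"
proof -
  have "continuous (at s within {a..b}) (\<lambda>t. gram_det (column 1 (T t)) (column 2 (T t)))"
    unfolding gram_det_def
    using has_vector_derivative_continuous[OF column_ode(1)[OF s]] by (intro continuous_intros)
  then have "eventually (\<lambda>t. 0 < gram_det (column 1 (T t)) (column 2 (T t))) (at s within {a..b})"
    using G by (simp add: continuous_within order_tendstoD(1))
  then obtain e where "0 < e" and near: "\<And>t. t \<in> {a..b} \<Longrightarrow> t \<noteq> s \<Longrightarrow> dist t s < e
      \<Longrightarrow> 0 < gram_det (column 1 (T t)) (column 2 (T t))"
    unfolding eventually_at by auto
  show ?thesis
    using that[OF \<open>0 < e\<close>] near G by (metis IntE dist_commute mem_ball)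
qed

lemma schatten1_has_derivative:
  assumes "t \<in> {a..b}" and "0 < gram_det (column 1 (T t)) (column 2 (T t))"
  shows "((\<lambda>r. schatten1 (T r)) has_real_derivative schatten1_deriv t) (at t within {a..b})"
  unfolding schatten1_eq_schatten1_pair schatten1_deriv_def
  using assms by (intro schatten1_pair_has_derivative column_ode)

lemma schatten1_deriv_differentiable:
  assumes "s \<in> {a..b}" and G: "0 < gram_det (column 1 (T s)) (column 2 (T s))"
  shows "schatten1_deriv differentiable (at s within {a..b})"
proof -
  have "(\<lambda>r. column j (T r)) differentiable (at s within {a..b})"
    and "(\<lambda>r. column j (T' r)) differentiable (at s within {a..b})" for j
    using column_ode[OF assms(1)] by (auto intro: differentiableI_vector)
  moreover have "0 < gram_det (column 2 (T s)) (column 1 (T s))"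
    using G by (simp add: gram_det_commute)
  ultimately show ?thesis
    unfolding schatten1_deriv_def using G
    by (intro differentiable_add differentiable_inner differentiable_polar_col)
qed

lemma polar_pairing_le_second_derivative:
  assumes "a < b" and s: "s \<in> {a..b}" and G: "0 < gram_det (column 1 (T s)) (column 2 (T s))"
    and u'': "(schatten1_deriv has_real_derivative u'') (at s within {a..b})"
  shows "polar_col (column 1 (T s)) (column 2 (T s)) \<bullet> (A s *v column 1 (T s))
    + polar_col (column 2 (T s)) (column 1 (T s)) \<bullet> (A s *v column 2 (T s)) \<le> u''"
proof -
  define v w where "v r = column 1 (T r)" "w r = column 2 (T r)" for r
  define q1 q2 where "q1 = polar_col (v s) (w s)" "q2 = polar_col (w s) (v s)"
  obtain e where "0 < e" and G_near: "\<And>t. t \<in> ball s e \<inter> {a..b} \<Longrightarrow> 0 < gram_det (v t) (w t)"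
    using gram_det_pos_near[OF s G] unfolding v_w_def by blast
  \<comment> \<open>the polar minorant touches to first order, so it also bounds the second derivative\<close>
  have "0 \<le> u'' - (q1 \<bullet> (A s *v v s) + q2 \<bullet> (A s *v w s))"
  proof (rule second_derivative_nonneg_at_local_min[OF \<open>a < b\<close> s \<open>0 < e\<close>, where
        h = "\<lambda>r. schatten1 (T r) - (q1 \<bullet> v r + q2 \<bullet> w r)"
        and h' = "\<lambda>r. schatten1_deriv r - (q1 \<bullet> column 1 (T' r) + q2 \<bullet> column 2 (T' r))"])
    show "schatten1 (T s) - (q1 \<bullet> v s + q2 \<bullet> w s) \<le> schatten1 (T r) - (q1 \<bullet> v r + q2 \<bullet> w r)" for r
      using polar_col_orthonormal(3)[OF G] schatten1_pair_ge_polar[OF G, of "v r" "w r"]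
      by (simp add: q1_q2_def v_w_def schatten1_eq_schatten1_pair)
    show "((\<lambda>r. schatten1 (T r) - (q1 \<bullet> v r + q2 \<bullet> w r)) has_real_derivative
        schatten1_deriv r - (q1 \<bullet> column 1 (T' r) + q2 \<bullet> column 2 (T' r))) (at r within {a..b})"
      if "r \<in> ball s e \<inter> {a..b}" for r
      using that G_near[OF that] unfolding v_w_def
      by (intro DERIV_diff DERIV_add schatten1_has_derivative has_vector_derivative_inner_const
          column_ode) auto
    show "schatten1_deriv s - (q1 \<bullet> column 1 (T' s) + q2 \<bullet> column 2 (T' s)) = 0"
      by (simp add: schatten1_deriv_def q1_q2_def v_w_def)
    show "((\<lambda>r. schatten1_deriv r - (q1 \<bullet> column 1 (T' r) + q2 \<bullet> column 2 (T' r)))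
        has_real_derivative u'' - (q1 \<bullet> (A s *v v s) + q2 \<bullet> (A s *v w s))) (at s within {a..b})"
      unfolding v_w_def
      by (intro DERIV_diff DERIV_add u'' has_vector_derivative_inner_const column_ode s)
  qed
  then show ?thesis by (simp add: q1_q2_def v_w_def)
qed

lemma schatten1_second_derivative_pos:
  assumes "a < b" and s: "s \<in> {a..b}" and "rank (T s) = 2" and "A s ** T s \<noteq> 0"
  shows "\<exists>e>0. \<exists>u' u''. (\<forall>t\<in>ball s e \<inter> {a..b}.
      ((\<lambda>r. schatten1 (T r)) has_real_derivative u' t) (at t within {a..b}))
    \<and> (u' has_real_derivative u'') (at s within {a..b}) \<and> u'' > 0"
proof -
  have G: "0 < gram_det (column 1 (T s)) (column 2 (T s))"
    using gram_det_pos_if_rank_2[OF \<open>rank (T s) = 2\<close>] .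
  obtain e where "0 < e"
    and G_near: "\<And>t. t \<in> ball s e \<inter> {a..b} \<Longrightarrow> 0 < gram_det (column 1 (T t)) (column 2 (T t))"
    using gram_det_pos_near[OF s G] by blast
  obtain u'' where u'': "(schatten1_deriv has_real_derivative u'') (at s within {a..b})"
    using schatten1_deriv_differentiable[OF s G] by (auto simp: real_differentiable_def)
  have "A s *v column 1 (T s) \<noteq> 0 \<or> A s *v column 2 (T s) \<noteq> 0"
    using \<open>A s ** T s \<noteq> 0\<close> by (simp add: matrix_2_eq_0_iff_columns column_matrix_mult)
  then have "0 < u''"
    using polar_col_pairing_psd(2)[OF G psd[OF s]]
      polar_pairing_le_second_derivative[OF \<open>a < b\<close> s G u''] by linarith
  then show ?thesis
    using \<open>0 < e\<close> u'' G_near schatten1_has_derivative by blast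
qed

end

theorem propositionA3:
  fixes A :: "real \<Rightarrow> real^3^3" and T :: "real \<Rightarrow> real^2^3"
    and DA :: "nat \<Rightarrow> real \<Rightarrow> real^3^3" and DT :: "nat \<Rightarrow> real \<Rightarrow> real^2^3"
  assumes A_smooth: "smooth_derivs A DA"
    and A_pos: "\<forall>s\<in>{0..1}. psd_matrix (A s)"
    and T_smooth: "smooth_derivs T DT"
    and T_ode: "\<forall>s\<in>{0..1}. DT 2 s = A s ** T s"
  shows "convex_on {0..1} (\<lambda>s. schatten1 (T s))
    \<and> (\<forall>s\<in>{0..1}. rank (T s) = 2 \<and> A s ** T s \<noteq> 0 \<longrightarrow>
         (\<exists>e>0. \<exists>u' u''.
            (\<forall>t\<in>ball s e \<inter> {0..1}.
               ((\<lambda>r. schatten1 (T r)) has_real_derivative u' t) (at t within {0..1}))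
            \<and> (u' has_real_derivative u'') (at s within {0..1})
            \<and> u'' > 0))"
proof -
  have T: "(T has_vector_derivative DT 1 t) (at t within {0..1})" if "t \<in> {0..1}" for t
    using T_smooth that unfolding smooth_derivs_def
    by (metis One_nat_def has_vector_derivative_transform)
  have T': "(DT 1 has_vector_derivative A t ** T t) (at t within {0..1})" if "t \<in> {0..1}" for t
    using T_smooth T_ode that unfolding smooth_derivs_def by (metis Suc_1)
  interpret psd_matrix_ode 0 1 T "DT 1" A
    using T T' A_pos by unfold_locales auto
  show ?thesis
    using convex_on_schatten1 schatten1_second_derivative_pos by simp
qed

end
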